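(* In the Gaussian sequential learning model with binary states and heterogeneous privacy budgets described in the context, where the budgets $\varepsilon_n$ are drawn independently from the uniform distribution $\mathrm{U}[0,1]$, asymptotic learning occurs almost surely under the smooth randomized response strategy.
   Context: Gaussian model: unknown state $\theta\in\{-1,+1\}$ with uniform prior; agents $n=1,2,\dots$ act in sequence; agent $n$ privately observes $s_n\sim\mathcal{N}(\theta,\sigma^2)$, i.i.d. given $\theta$, $\sigma>0$, and has a private budget $\varepsilon_n\sim\mathrm{U}[0,1]$, independent across agents and of everything else. The public log-likelihood ratio is $l_n=\log\frac{\mathbb{P}(\theta=+1\mid x_1,\dots,x_{n-1})}{\mathbb{P}(\theta=-1\mid x_1,\dots,x_{n-1})}$, $l_1=0$, where $x_i$ are reported actions. With $t(l)=-\sigma^2l/2$, agent $n$'s intended action is $a_n=+1$ if $s_n>t(l_n)$, else $-1$; under smooth randomized response she reports $x_n=a_n$ with probability $1-u_n$ and $x_n=-a_n$ with probability $u_n=\frac12e^{-\varepsilon_n|s_n-t(l_n)|}$. The public, not observing $\varepsilon_n$, updates $l_{n+1}=l_n+\log\frac{\mathbb{P}(x_n\mid l_n,\theta=+1)}{\mathbb{P}(x_n\mid l_n,\theta=-1)}$, where these probabilities average over both $s_n$ and $\varepsilon_n$. Asymptotic learning means agents' actions converge to the true state, i.e., $\lim_{n\to\infty}\mathbb{P}(a_n=\theta)=1$. *)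

theory Defs
  imports "HOL-Probability.Probability"
begin

text \<open>States and actions are encoded as the reals -1 and +1.
  l denotes the current public log-likelihood ratio.\<close>

definition thr :: "real \<Rightarrow> real \<Rightarrow> real" where
  "thr \<sigma> l = - (\<sigma>\<^sup>2 * l / 2)"

definition act :: "real \<Rightarrow> real \<Rightarrow> real \<Rightarrow> real" where
  "act \<sigma> l s = (if s > thr \<sigma> l then 1 else -1)"

definition flip_prob :: "real \<Rightarrow> real \<Rightarrow> real \<Rightarrow> real \<Rightarrow> real" where
  "flip_prob \<sigma> l s \<epsilon> = exp (- \<epsilon> * \<bar>s - thr \<sigma> l\<bar>) / 2"

definition report_prob :: "real \<Rightarrow> real \<Rightarrow> real \<Rightarrow> real \<Rightarrow> real \<Rightarrow> real" where
  "report_prob \<sigma> l s \<epsilon> x =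
     (if x = act \<sigma> l s then 1 - flip_prob \<sigma> l s \<epsilon> else flip_prob \<sigma> l s \<epsilon>)"

text \<open>P(x_n = x | l_n = l, theta): averaged over s ~ N(theta, sigma^2) and
  eps ~ U[0,1] (density 1 on [0,1]).\<close>
definition xprob :: "real \<Rightarrow> real \<Rightarrow> real \<Rightarrow> real \<Rightarrow> real" where
  "xprob \<sigma> l \<theta> x =
     (LINT s|lborel. normal_density \<theta> \<sigma> s *
        (LINT \<epsilon>:{0..1}|lborel. report_prob \<sigma> l s \<epsilon> x))"

definition upd :: "real \<Rightarrow> real \<Rightarrow> real \<Rightarrow> real" where
  "upd \<sigma> l x = l + ln (xprob \<sigma> l 1 x / xprob \<sigma> l (-1) x)"

text \<open>Conditional law (given theta) of the public LLR: llr_law sigma theta n is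
  the distribution of l_{n+1}; llr_law sigma theta 0 is l_1 = 0.\<close>
primrec llr_law :: "real \<Rightarrow> real \<Rightarrow> nat \<Rightarrow> real pmf" where
  "llr_law \<sigma> \<theta> 0 = return_pmf 0"
| "llr_law \<sigma> \<theta> (Suc n) =
     bind_pmf (llr_law \<sigma> \<theta> n)
       (\<lambda>l. map_pmf (\<lambda>b. upd \<sigma> l (if b then 1 else -1))
               (bernoulli_pmf (xprob \<sigma> l \<theta> 1)))"

definition correct_prob_given :: "real \<Rightarrow> real \<Rightarrow> real \<Rightarrow> real" where
  "correct_prob_given \<sigma> \<theta> l =
     (LINT s|lborel. normal_density \<theta> \<sigma> s * indicator {s. act \<sigma> l s = \<theta>} s)"

text \<open>P(a_n = theta) for agent n (n >= 1), theta uniform on {-1,+1}.\<close>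
definition prob_correct :: "real \<Rightarrow> nat \<Rightarrow> real" where
  "prob_correct \<sigma> n =
     (\<Sum>\<theta>\<in>{-1, 1::real}. (1/2) *
        measure_pmf.expectation (llr_law \<sigma> \<theta> (n - 1)) (correct_prob_given \<sigma> \<theta>))"

end

theory Submission
  imports Defs "HOL-Real_Asymp.Real_Asymp"
begin

text \<open>Fix the true state \<theta> and let Z = exp (-\<theta> l / 2) be the square root of the public odds
  against \<theta>. One report multiplies the conditional expectation of Z by the Bhattacharyya
  coefficient of the two report laws, which is at most 1 - (p - q)^2 / 4, where p and q are the
  probabilities of reporting +1 under \<theta> = 1 and \<theta> = -1. Coupling the signals of the two states
  as u + 1 and u - 1, they straddle the threshold whenever u is within 1/2 of it, and then a
  budget above 1/2 makes the two reports differ by a fixed margin; so p - q is bounded below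
  uniformly for l in any window [-M, M]. Hence E Z drops by a fixed multiple of
  P(\<bar>l_n\<bar> \<le> M) at every step, and these probabilities are summable, so they tend to 0.
  Markov's inequality for Z shows that l_n is rarely far on the wrong side, and far on the right
  side an agent errs only if her signal crosses a distant threshold, which Chebyshev's inequality
  makes unlikely.\<close>

lemma normal_density_ge_if_dist_le:
  assumes "0 < \<sigma>" "\<bar>x - \<mu>\<bar> \<le> K"
  shows "normal_density 0 \<sigma> K \<le> normal_density \<mu> \<sigma> x"
proof -
  have "(x - \<mu>)\<^sup>2 \<le> K\<^sup>2"
    using power_mono[OF assms(2), of 2] by simp
  then have "- K\<^sup>2 / (2 * \<sigma>\<^sup>2) \<le> - (x - \<mu>)\<^sup>2 / (2 * \<sigma>\<^sup>2)"
    using assms(1) by (intro divide_right_mono) auto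
  then show ?thesis
    unfolding normal_density_def using assms(1) by (intro mult_left_mono) auto
qed

lemma normal_tail_chebyshev:
  assumes "0 < \<sigma>" "S \<in> sets lborel" "0 < d" "\<And>x. x \<in> S \<Longrightarrow> d \<le> \<bar>x - \<mu>\<bar>"
  shows "(\<integral>x. normal_density \<mu> \<sigma> x * indicator S x \<partial>lborel) \<le> \<sigma>\<^sup>2 / d\<^sup>2"
proof -
  have "(\<integral>x. normal_density \<mu> \<sigma> x * indicator S x \<partial>lborel)
      \<le> (\<integral>x. normal_density \<mu> \<sigma> x * (x - \<mu>) ^ (2 * 1) / d\<^sup>2 \<partial>lborel)"
  proof (rule integral_mono)
    show "integrable lborel (\<lambda>x. normal_density \<mu> \<sigma> x * indicator S x)"
      using assms by (intro integrable_real_mult_indicator) auto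
    show "integrable lborel (\<lambda>x. normal_density \<mu> \<sigma> x * (x - \<mu>) ^ (2 * 1) / d\<^sup>2)"
      using integrable_normal_moment[OF assms(1), of \<mu> 2] by simp
    fix x
    have "indicator S x \<le> (x - \<mu>)\<^sup>2 / d\<^sup>2"
    proof (cases "x \<in> S")
      case True
      then have "d\<^sup>2 \<le> (x - \<mu>)\<^sup>2"
        using assms(3,4) by (metis abs_ge_zero less_imp_le power2_abs power_mono)
      then show ?thesis using True assms(3) by simp
    qed simp
    then have "normal_density \<mu> \<sigma> x * indicator S x \<le> normal_density \<mu> \<sigma> x * ((x - \<mu>)\<^sup>2 / d\<^sup>2)"
      by (rule mult_left_mono) (simp add: normal_density_nonneg)
    then show "normal_density \<mu> \<sigma> x * indicator S x \<le> normal_density \<mu> \<sigma> x * (x - \<mu>) ^ (2 * 1) / d\<^sup>2"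
      by simp
  qed
  also have "\<dots> = \<sigma>\<^sup>2 / d\<^sup>2"
    using integral_normal_moment_even[OF assms(1), of \<mu> 1] by (simp add: power2_eq_square)
  finally show ?thesis .
qed

lemma integral_ge_const_on_interval:
  fixes f :: "real \<Rightarrow> real"
  assumes "integrable lborel f" "\<And>x. c * indicator {a..b} x \<le> f x" "a \<le> b"
  shows "c * (b - a) \<le> integral\<^sup>L lborel f"
proof -
  have "(\<integral>x. c * indicator {a..b} x \<partial>lborel) \<le> integral\<^sup>L lborel f"
    using assms by (intro integral_mono) auto
  then show ?thesis using assms(3) by simp
qed

lemma set_integrable_unit_interval_const: "set_integrable lborel {0..1::real} (\<lambda>_. c::real)"
  unfolding set_integrable_def
  by (rule integrableI_bounded_set_indicator[where B="\<bar>c\<bar>"]) auto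

lemma set_integral_unit_interval_const: "(LINT _:{0..1::real}|lborel. c) = (c::real)"
  by (subst set_integral_const) auto

lemma sqrt_mult_le_mean_minus_square:
  fixes a b :: real
  assumes "0 \<le> a" "a \<le> 1" "0 \<le> b" "b \<le> 1"
  shows "sqrt (a * b) \<le> (a + b) / 2 - (a - b)\<^sup>2 / 8"
proof -
  define x y where "x = sqrt a" and "y = sqrt b"
  have ab: "a = x\<^sup>2" "b = y\<^sup>2" "sqrt (a * b) = x * y"
    unfolding x_def y_def using assms by (simp_all add: real_sqrt_mult)
  have "x \<le> 1" "y \<le> 1" "0 \<le> x" "0 \<le> y"
    unfolding x_def y_def using assms by auto
  then have "(x + y)\<^sup>2 \<le> 2\<^sup>2"
    by (intro power_mono) auto
  then have "0 \<le> (x - y)\<^sup>2 * (4 - (x + y)\<^sup>2)" by simp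
  moreover have "(x\<^sup>2 + y\<^sup>2) / 2 - (x\<^sup>2 - y\<^sup>2)\<^sup>2 / 8 - x * y = (x - y)\<^sup>2 * (4 - (x + y)\<^sup>2) / 8"
    by (simp add: power2_eq_square field_simps)
  ultimately show ?thesis unfolding ab(3) unfolding ab(1,2) by linarith
qed

lemma bernoulli_bhattacharyya_le:
  fixes p q :: real
  assumes "0 \<le> p" "p \<le> 1" "0 \<le> q" "q \<le> 1"
  shows "sqrt (p * q) + sqrt ((1 - p) * (1 - q)) \<le> 1 - (p - q)\<^sup>2 / 4"
proof -
  have "sqrt (p * q) + sqrt ((1 - p) * (1 - q))
      \<le> ((p + q) / 2 - (p - q)\<^sup>2 / 8) + (((1 - p) + (1 - q)) / 2 - ((1 - p) - (1 - q))\<^sup>2 / 8)"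
    using assms by (intro add_mono sqrt_mult_le_mean_minus_square) auto
  also have "\<dots> = 1 - (p - q)\<^sup>2 / 4" by (simp add: power2_eq_square field_simps)
  finally show ?thesis .
qed

lemma mult_exp_neg_half_ln_div:
  fixes a b :: real
  assumes "0 < a" "0 < b"
  shows "a * exp (- ln (a / b) / 2) = sqrt (a * b)"
proof -
  have "exp (- ln (a / b) / 2) = (b / a) powr (1/2)"
    using assms by (simp add: powr_def ln_div)
  also have "\<dots> = sqrt (b / a)" using assms by (simp add: powr_half_sqrt)
  also have "\<dots> = sqrt (a\<^sup>2 * (b / a)) / a"
    using assms by (subst real_sqrt_mult) simp
  also have "\<dots> = sqrt (a * b) / a"
    using assms by (simp add: power2_eq_square)
  finally show ?thesis using assms by (simp add: field_simps)
qed

lemma expectation_bind_pmf_finite: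
  fixes h :: "'b \<Rightarrow> real"
  assumes "finite (set_pmf p)" "\<And>x. x \<in> set_pmf p \<Longrightarrow> finite (set_pmf (f x))"
  shows "measure_pmf.expectation (bind_pmf p f) h
       = measure_pmf.expectation p (\<lambda>x. measure_pmf.expectation (f x) h)"
proof -
  have "measure_pmf.expectation (bind_pmf p f) h
      = (\<Sum>x\<in>set_pmf p. pmf p x *\<^sub>R measure_pmf.expectation (f x) h)"
    by (rule pmf_expectation_bind) (use assms in auto)
  also have "\<dots> = measure_pmf.expectation p (\<lambda>x. measure_pmf.expectation (f x) h)"
    by (rule integral_measure_pmf[symmetric]) (use assms in auto)
  finally show ?thesis .
qed

lemma tendsto_zero_if_telescoping_bound:
  fixes x z :: "nat \<Rightarrow> real"
  assumes "0 < \<kappa>" "\<And>n. 0 \<le> x n" "\<And>n. 0 \<le> z n" "\<And>n. \<kappa> * x n \<le> z n - z (Suc n)"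
  shows "x \<longlonglongrightarrow> 0"
proof -
  have telescope: "\<kappa> * (\<Sum>n<N. x n) \<le> z 0 - z N" for N
  proof (induction N)
    case (Suc N)
    then show ?case using assms(4)[of N] by (simp add: distrib_left)
  qed simp
  have "\<kappa> * (\<Sum>n<N. x n) \<le> z 0" for N
    using telescope[of N] assms(3)[of N] by linarith
  then have "(\<Sum>n<N. x n) \<le> z 0 / \<kappa>" for N
    using assms(1) by (simp add: pos_le_divide_eq mult.commute)
  then have "summable x"
    using assms(2) by (intro summableI_nonneg_bounded)
  then show ?thesis by (rule summable_LIMSEQ_zero)
qed

lemma tendsto_zero_if_bounded_by_vanishing:
  fixes x :: "nat \<Rightarrow> real" and b :: "real \<Rightarrow> nat \<Rightarrow> real" and c :: "real \<Rightarrow> real"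
  assumes "\<And>M n. 0 < M \<Longrightarrow> \<bar>x n\<bar> \<le> b M n + c M"
    and "\<And>M. 0 < M \<Longrightarrow> b M \<longlonglongrightarrow> 0" and "(c \<longlongrightarrow> 0) at_top"
  shows "x \<longlonglongrightarrow> 0"
proof (rule LIMSEQ_I)
  fix r :: real assume "0 < r"
  then have "eventually (\<lambda>M. 0 < M \<and> c M < r / 2) at_top"
    using assms(3) by (intro eventually_conj eventually_gt_at_top order_tendstoD(2)) auto
  then obtain M where M: "0 < M" "c M < r / 2"
    by (auto simp: eventually_at_top_linorder)
  have "eventually (\<lambda>n. b M n < r / 2) sequentially"
    using assms(2)[OF M(1)] \<open>0 < r\<close> by (intro order_tendstoD(2)) auto
  then obtain N where N: "\<And>n. N \<le> n \<Longrightarrow> b M n < r / 2"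
    by (auto simp: eventually_sequentially)
  have "\<bar>x n\<bar> < r" if "N \<le> n" for n
    using assms(1)[OF M(1), of n] N[OF that] M(2) by linarith
  then show "\<exists>N. \<forall>n\<ge>N. norm (x n - 0) < r"
    by auto
qed

section \<open>Report probabilities\<close>

lemma report_prob_measurable [measurable]:
  "(\<lambda>(s, \<epsilon>). report_prob \<sigma> l s \<epsilon> x) \<in> borel_measurable (lborel \<Otimes>\<^sub>M lborel)"
  unfolding report_prob_def flip_prob_def act_def thr_def by measurable

lemma flip_prob_pos: "0 < flip_prob \<sigma> l s \<epsilon>"
  by (simp add: flip_prob_def)

lemma flip_prob_le_half: "0 \<le> \<epsilon> \<Longrightarrow> flip_prob \<sigma> l s \<epsilon> \<le> 1/2"
  by (simp add: flip_prob_def)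

lemma flip_prob_ge: "\<epsilon> \<le> 1 \<Longrightarrow> exp (- \<bar>s - thr \<sigma> l\<bar>) / 2 \<le> flip_prob \<sigma> l s \<epsilon>"
  using mult_right_mono[of \<epsilon> 1 "\<bar>s - thr \<sigma> l\<bar>"] by (simp add: flip_prob_def)

lemma report_prob_ge_flip_prob: "0 \<le> \<epsilon> \<Longrightarrow> flip_prob \<sigma> l s \<epsilon> \<le> report_prob \<sigma> l s \<epsilon> x"
  using flip_prob_le_half[of \<epsilon> \<sigma> l s] by (auto simp: report_prob_def)

lemma report_prob_bounds: "0 \<le> \<epsilon> \<Longrightarrow> 0 \<le> report_prob \<sigma> l s \<epsilon> x \<and> report_prob \<sigma> l s \<epsilon> x \<le> 1"
  using flip_prob_pos[of \<sigma> l s \<epsilon>] flip_prob_le_half[of \<epsilon> \<sigma> l s] by (auto simp: report_prob_def)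

lemma report_prob_minus_one: "report_prob \<sigma> l s \<epsilon> (-1) = 1 - report_prob \<sigma> l s \<epsilon> 1"
  by (auto simp: report_prob_def act_def)

lemma report_prob_mono:
  assumes "0 \<le> \<epsilon>" "s\<^sub>1 \<le> s\<^sub>2"
  shows "report_prob \<sigma> l s\<^sub>1 \<epsilon> 1 \<le> report_prob \<sigma> l s\<^sub>2 \<epsilon> 1"
proof -
  define t where "t = thr \<sigma> l"
  have below: "report_prob \<sigma> l s \<epsilon> 1 = exp (- (\<epsilon> * (t - s))) / 2" if "s \<le> t" for s
    using that by (simp add: report_prob_def act_def flip_prob_def t_def abs_if)
  have above: "report_prob \<sigma> l s \<epsilon> 1 = 1 - exp (- (\<epsilon> * (s - t))) / 2" if "t < s" for s
    using that by (simp add: report_prob_def act_def flip_prob_def t_def)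
  consider "s\<^sub>2 \<le> t" | "s\<^sub>1 \<le> t" "t < s\<^sub>2" | "t < s\<^sub>1"
    using assms(2) by linarith
  then show ?thesis
  proof cases
    case 1
    then show ?thesis
      using assms mult_left_mono[of "t - s\<^sub>2" "t - s\<^sub>1" \<epsilon>] by (simp add: below)
  next
    case 2
    have "exp (- (\<epsilon> * (t - s\<^sub>1))) \<le> 1" "exp (- (\<epsilon> * (s\<^sub>2 - t))) \<le> 1"
      using 2 assms(1) by auto
    then show ?thesis unfolding below[OF 2(1)] above[OF 2(2)] by linarith
  next
    case 3
    then show ?thesis
      using assms mult_left_mono[of "s\<^sub>1 - t" "s\<^sub>2 - t" \<epsilon>] by (simp add: above)
  qed
qed

lemma report_prob_gap:
  assumes "0 \<le> \<epsilon>" "\<epsilon> \<le> 1" "s\<^sub>1 \<le> thr \<sigma> l - 1/2" "thr \<sigma> l + 1/2 \<le> s\<^sub>2"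
  shows "(1 - exp (-1/4)) * indicator {1/2..1} \<epsilon> \<le> report_prob \<sigma> l s\<^sub>2 \<epsilon> 1 - report_prob \<sigma> l s\<^sub>1 \<epsilon> 1"
proof -
  define t where "t = thr \<sigma> l"
  have "report_prob \<sigma> l s\<^sub>2 \<epsilon> 1 = 1 - exp (- \<epsilon> * (s\<^sub>2 - t)) / 2"
    "report_prob \<sigma> l s\<^sub>1 \<epsilon> 1 = exp (- \<epsilon> * (t - s\<^sub>1)) / 2"
    using assms(3,4) by (auto simp: report_prob_def act_def flip_prob_def t_def)
  moreover have "\<epsilon> * (1/2) \<le> \<epsilon> * (s\<^sub>2 - t)" "\<epsilon> * (1/2) \<le> \<epsilon> * (t - s\<^sub>1)"
    using assms by (intro mult_left_mono; simp add: t_def)+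
  then have "exp (- \<epsilon> * (s\<^sub>2 - t)) \<le> exp (- \<epsilon> / 2)" "exp (- \<epsilon> * (t - s\<^sub>1)) \<le> exp (- \<epsilon> / 2)"
    by simp_all
  moreover have "(1 - exp (-1/4)) * indicator {1/2..1} \<epsilon> \<le> 1 - exp (- \<epsilon> / 2)"
    using assms(1) by (auto split: split_indicator)
  ultimately show ?thesis by linarith
qed

lemma report_prob_set_integrable: "set_integrable lborel {0..1} (\<lambda>\<epsilon>. report_prob \<sigma> l s \<epsilon> x)"
proof -
  have "\<bar>report_prob \<sigma> l s \<epsilon> x\<bar> \<le> 1" if "0 \<le> \<epsilon>" for \<epsilon>
    using report_prob_bounds[OF that, of \<sigma> l s x] by auto
  then show ?thesis
    unfolding set_integrable_def by (intro integrableI_bounded_set_indicator[where B=1]) auto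
qed

definition avg_report_prob :: "real \<Rightarrow> real \<Rightarrow> real \<Rightarrow> real \<Rightarrow> real" where
  "avg_report_prob \<sigma> l s x = (LINT \<epsilon>:{0..1}|lborel. report_prob \<sigma> l s \<epsilon> x)"

lemma avg_report_prob_measurable [measurable]: "(\<lambda>s. avg_report_prob \<sigma> l s x) \<in> borel_measurable lborel"
  unfolding avg_report_prob_def set_lebesgue_integral_def by measurable

lemma avg_report_prob_bounds: "0 \<le> avg_report_prob \<sigma> l s x \<and> avg_report_prob \<sigma> l s x \<le> 1"
proof
  have "(LINT \<epsilon>:{0..1::real}|lborel. 0) \<le> avg_report_prob \<sigma> l s x"
    unfolding avg_report_prob_def
    by (intro set_integral_mono set_integrable_unit_interval_const report_prob_set_integrable)
       (simp add: report_prob_bounds)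
  then show "0 \<le> avg_report_prob \<sigma> l s x" by (simp add: set_integral_unit_interval_const)
  have "avg_report_prob \<sigma> l s x \<le> (LINT \<epsilon>:{0..1::real}|lborel. 1)"
    unfolding avg_report_prob_def
    by (intro set_integral_mono set_integrable_unit_interval_const report_prob_set_integrable)
       (simp add: report_prob_bounds)
  then show "avg_report_prob \<sigma> l s x \<le> 1" by (simp add: set_integral_unit_interval_const)
qed

lemma avg_report_prob_minus_one: "avg_report_prob \<sigma> l s (-1) = 1 - avg_report_prob \<sigma> l s 1"
  unfolding avg_report_prob_def report_prob_minus_one
  by (simp add: set_integral_diff(2)[OF set_integrable_unit_interval_const report_prob_set_integrable]
      set_integral_unit_interval_const)

lemma avg_report_prob_ge: "exp (- \<bar>s - thr \<sigma> l\<bar>) / 2 \<le> avg_report_prob \<sigma> l s x"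
proof -
  have "(LINT \<epsilon>:{0..1::real}|lborel. exp (- \<bar>s - thr \<sigma> l\<bar>) / 2) \<le> avg_report_prob \<sigma> l s x"
    unfolding avg_report_prob_def
    by (intro set_integral_mono set_integrable_unit_interval_const report_prob_set_integrable)
       (use flip_prob_ge report_prob_ge_flip_prob in \<open>fastforce intro: order_trans\<close>)
  then show ?thesis by (simp add: set_integral_unit_interval_const)
qed

lemma avg_report_prob_mono: "s\<^sub>1 \<le> s\<^sub>2 \<Longrightarrow> avg_report_prob \<sigma> l s\<^sub>1 1 \<le> avg_report_prob \<sigma> l s\<^sub>2 1"
  unfolding avg_report_prob_def
  by (intro set_integral_mono report_prob_set_integrable) (auto intro: report_prob_mono)

lemma avg_report_prob_gap:
  assumes "s\<^sub>1 \<le> thr \<sigma> l - 1/2" "thr \<sigma> l + 1/2 \<le> s\<^sub>2"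
  shows "(1 - exp (-1/4)) / 2 \<le> avg_report_prob \<sigma> l s\<^sub>2 1 - avg_report_prob \<sigma> l s\<^sub>1 1"
proof -
  let ?g = "\<lambda>\<epsilon>::real. (1 - exp (-1/4)) * indicator {1/2..1} \<epsilon> :: real"
  have "(\<lambda>\<epsilon>. indicator {0..1} \<epsilon> *\<^sub>R ?g \<epsilon>) = ?g"
    by (auto split: split_indicator)
  then have "(1 - exp (-1/4)) / 2 = (LINT \<epsilon>:{0..1}|lborel. ?g \<epsilon>)"
    unfolding set_lebesgue_integral_def by simp
  also have "\<dots> \<le> (LINT \<epsilon>:{0..1}|lborel. report_prob \<sigma> l s\<^sub>2 \<epsilon> 1 - report_prob \<sigma> l s\<^sub>1 \<epsilon> 1)"
  proof (rule set_integral_mono)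
    show "set_integrable lborel {0..1} ?g"
      unfolding set_integrable_def
      by (rule integrableI_bounded_set_indicator[where B=1]) (auto split: split_indicator)
  qed (use report_prob_gap[OF _ _ assms] report_prob_set_integrable in auto)
  also have "\<dots> = avg_report_prob \<sigma> l s\<^sub>2 1 - avg_report_prob \<sigma> l s\<^sub>1 1"
    unfolding avg_report_prob_def
    by (rule set_integral_diff(2)[OF report_prob_set_integrable report_prob_set_integrable])
  finally show ?thesis .
qed

lemma xprob_eq_avg_report_prob:
  "xprob \<sigma> l \<theta> x = (\<integral>s. normal_density \<theta> \<sigma> s * avg_report_prob \<sigma> l s x \<partial>lborel)"
  unfolding xprob_def avg_report_prob_def ..

lemma integrable_normal_density_mult_avg_report_prob:
  "0 < \<sigma> \<Longrightarrow> integrable lborel (\<lambda>s. normal_density \<mu> \<sigma> s * avg_report_prob \<sigma> l (a + s) x)"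
  by (rule Bochner_Integration.integrable_bound[OF integrable_normal_density[where \<mu>=\<mu>]])
     (auto simp: avg_report_prob_bounds mult_left_le)

lemma xprob_minus_one:
  assumes "0 < \<sigma>"
  shows "xprob \<sigma> l \<theta> (-1) = 1 - xprob \<sigma> l \<theta> 1"
proof -
  have "xprob \<sigma> l \<theta> (-1)
      = (\<integral>s. normal_density \<theta> \<sigma> s - normal_density \<theta> \<sigma> s * avg_report_prob \<sigma> l s 1 \<partial>lborel)"
    unfolding xprob_eq_avg_report_prob avg_report_prob_minus_one by (simp add: algebra_simps)
  also have "\<dots> = 1 - xprob \<sigma> l \<theta> 1"
    unfolding xprob_eq_avg_report_prob
    using integrable_normal_density_mult_avg_report_prob[OF assms, where a=0] integrable_normal_density[OF assms]
    by (simp add: assms)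
  finally show ?thesis .
qed

lemma xprob_pos:
  assumes "0 < \<sigma>"
  shows "0 < xprob \<sigma> l \<theta> x"
proof -
  define t where "t = thr \<sigma> l"
  define c where "c = normal_density 0 \<sigma> (\<bar>t - \<theta>\<bar> + 1/2) * (exp (-1/2) / 2)"
  have "c * indicator {t - 1/2..t + 1/2} s \<le> normal_density \<theta> \<sigma> s * avg_report_prob \<sigma> l s x" for s
  proof (cases "s \<in> {t - 1/2..t + 1/2}")
    case True
    have "normal_density 0 \<sigma> (\<bar>t - \<theta>\<bar> + 1/2) \<le> normal_density \<theta> \<sigma> s"
      using True assms by (intro normal_density_ge_if_dist_le) auto
    moreover have "exp (-1/2) / 2 \<le> avg_report_prob \<sigma> l s x"
    proof -
      have "\<bar>s - thr \<sigma> l\<bar> \<le> 1/2" unfolding abs_le_iff using True by (auto simp: t_def)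
      then have "exp (-1/2) / 2 \<le> exp (- \<bar>s - thr \<sigma> l\<bar>) / 2" by simp
      then show ?thesis using avg_report_prob_ge order_trans by blast
    qed
    ultimately have "c \<le> normal_density \<theta> \<sigma> s * avg_report_prob \<sigma> l s x"
      unfolding c_def by (rule mult_mono) (auto simp: normal_density_nonneg)
    then show ?thesis using True by simp
  next
    case False
    then show ?thesis
      using avg_report_prob_bounds[of \<sigma> l s x] by simp
  qed
  then have "c * ((t + 1/2) - (t - 1/2)) \<le> xprob \<sigma> l \<theta> x"
    unfolding xprob_eq_avg_report_prob
    using integrable_normal_density_mult_avg_report_prob[OF assms, where a=0]
    by (intro integral_ge_const_on_interval) auto
  moreover have "0 < c"
    unfolding c_def using assms by (simp add: normal_density_pos)
  ultimately show ?thesis by simp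
qed

lemma xprob_less_1: "0 < \<sigma> \<Longrightarrow> xprob \<sigma> l \<theta> 1 < 1"
  using xprob_minus_one[of \<sigma> l \<theta>] xprob_pos[of \<sigma> l \<theta> "-1"] by simp

lemma xprob_diff_eq_shifted_integral:
  assumes "0 < \<sigma>"
  shows "xprob \<sigma> l 1 1 - xprob \<sigma> l (-1) 1
       = (\<integral>u. normal_density 0 \<sigma> u * (avg_report_prob \<sigma> l (1 + u) 1 - avg_report_prob \<sigma> l (-1 + u) 1) \<partial>lborel)"
proof -
  have shift: "xprob \<sigma> l \<theta> 1 = (\<integral>u. normal_density 0 \<sigma> u * avg_report_prob \<sigma> l (\<theta> + u) 1 \<partial>lborel)" for \<theta>
    unfolding xprob_eq_avg_report_prob
    by (subst lborel_integral_real_affine[where c=1 and t=\<theta>]) (simp_all add: normal_density_def)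
  show ?thesis
    unfolding shift
    using Bochner_Integration.integral_diff[OF
        integrable_normal_density_mult_avg_report_prob[OF assms, of 0 l 1 1]
        integrable_normal_density_mult_avg_report_prob[OF assms, of 0 l "-1" 1]]
    by (simp add: algebra_simps)
qed

lemma xprob_gap_in_window:
  assumes "0 < \<sigma>"
  obtains \<delta> where "0 < \<delta>" "\<And>l. \<bar>l\<bar> \<le> M \<Longrightarrow> \<delta> \<le> xprob \<sigma> l 1 1 - xprob \<sigma> l (-1) 1"
proof -
  define \<delta> where "\<delta> = (1 - exp (-1/4)) / 2 * normal_density 0 \<sigma> (\<sigma>\<^sup>2 * M / 2 + 1/2)"
  have "\<delta> \<le> xprob \<sigma> l 1 1 - xprob \<sigma> l (-1) 1" if "\<bar>l\<bar> \<le> M" for l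
  proof -
    define t where "t = thr \<sigma> l"
    have "\<bar>t\<bar> \<le> \<sigma>\<^sup>2 * M / 2"
      unfolding t_def thr_def using that by (auto simp: abs_mult intro: mult_left_mono)
    have mono: "avg_report_prob \<sigma> l (-1 + u) 1 \<le> avg_report_prob \<sigma> l (1 + u) 1" for u
      by (intro avg_report_prob_mono) auto
    have "\<delta> * indicator {t - 1/2..t + 1/2} u
        \<le> normal_density 0 \<sigma> u * (avg_report_prob \<sigma> l (1 + u) 1 - avg_report_prob \<sigma> l (-1 + u) 1)" for u
    proof (cases "u \<in> {t - 1/2..t + 1/2}")
      case True
      have density: "normal_density 0 \<sigma> (\<sigma>\<^sup>2 * M / 2 + 1/2) \<le> normal_density 0 \<sigma> u"
        using True assms \<open>\<bar>t\<bar> \<le> \<sigma>\<^sup>2 * M / 2\<close> by (intro normal_density_ge_if_dist_le) auto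
      have gap: "(1 - exp (-1/4)) / 2 \<le> avg_report_prob \<sigma> l (1 + u) 1 - avg_report_prob \<sigma> l (-1 + u) 1"
        using True by (intro avg_report_prob_gap) (auto simp: t_def)
      moreover have "0 \<le> (1 - exp (-1/4::real)) / 2" by simp
      ultimately have "\<delta> \<le> (avg_report_prob \<sigma> l (1 + u) 1 - avg_report_prob \<sigma> l (-1 + u) 1) * normal_density 0 \<sigma> u"
        unfolding \<delta>_def using density mono[of u] by (intro mult_mono) (auto simp: normal_density_nonneg)
      then show ?thesis
        using True by (simp add: mult.commute)
    next
      case False
      then show ?thesis using mono[of u] by simp
    qed
    then have "\<delta> * ((t + 1/2) - (t - 1/2)) \<le> xprob \<sigma> l 1 1 - xprob \<sigma> l (-1) 1"
      unfolding xprob_diff_eq_shifted_integral[OF assms]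
      using Bochner_Integration.integrable_diff[OF
          integrable_normal_density_mult_avg_report_prob[OF assms, of 0 l 1 1]
          integrable_normal_density_mult_avg_report_prob[OF assms, of 0 l "-1" 1]]
      by (intro integral_ge_const_on_interval) (auto simp: right_diff_distrib)
    then show ?thesis by simp
  qed
  moreover have "0 < \<delta>"
    unfolding \<delta>_def by (simp add: normal_density_pos assms)
  ultimately show ?thesis using that by blast
qed

section \<open>Probability of a correct action\<close>

lemma act_measurable [measurable]: "act \<sigma> l \<in> borel_measurable lborel"
  unfolding act_def thr_def by measurable

lemma sets_act [measurable]:
  "{s. act \<sigma> l s = \<theta>} \<in> sets lborel" "{s. act \<sigma> l s \<noteq> \<theta>} \<in> sets lborel"
proof -
  have "{s \<in> space lborel. act \<sigma> l s = \<theta>} \<in> sets lborel" "{s \<in> space lborel. act \<sigma> l s \<noteq> \<theta>} \<in> sets lborel"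
    by measurable
  then show "{s. act \<sigma> l s = \<theta>} \<in> sets lborel" "{s. act \<sigma> l s \<noteq> \<theta>} \<in> sets lborel"
    by simp_all
qed

lemma correct_prob_given_eq:
  assumes "0 < \<sigma>"
  shows "correct_prob_given \<sigma> \<theta> l
       = 1 - (\<integral>s. normal_density \<theta> \<sigma> s * indicator {s. act \<sigma> l s \<noteq> \<theta>} s \<partial>lborel)"
proof -
  have "integrable lborel (\<lambda>s. normal_density \<theta> \<sigma> s * indicator {s. act \<sigma> l s = \<theta>} s)"
    "integrable lborel (\<lambda>s. normal_density \<theta> \<sigma> s * indicator {s. act \<sigma> l s \<noteq> \<theta>} s)"
    using assms by (auto intro: integrable_real_mult_indicator)
  note sum = Bochner_Integration.integral_add[OF this]
  have "(\<lambda>s. normal_density \<theta> \<sigma> s * indicator {s. act \<sigma> l s = \<theta>} s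
            + normal_density \<theta> \<sigma> s * indicator {s. act \<sigma> l s \<noteq> \<theta>} s) = normal_density \<theta> \<sigma>"
    by (auto split: split_indicator)
  then have "correct_prob_given \<sigma> \<theta> l + (\<integral>s. normal_density \<theta> \<sigma> s * indicator {s. act \<sigma> l s \<noteq> \<theta>} s \<partial>lborel) = 1"
    unfolding correct_prob_given_def using sum assms by simp
  then show ?thesis by simp
qed

lemma correct_prob_given_bounds:
  assumes "0 < \<sigma>"
  shows "0 \<le> correct_prob_given \<sigma> \<theta> l \<and> correct_prob_given \<sigma> \<theta> l \<le> 1"
proof
  show "0 \<le> correct_prob_given \<sigma> \<theta> l"
    unfolding correct_prob_given_def by (intro integral_nonneg_AE) auto
  have "0 \<le> (\<integral>s. normal_density \<theta> \<sigma> s * indicator {s. act \<sigma> l s \<noteq> \<theta>} s \<partial>lborel)"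
    by (intro integral_nonneg_AE) auto
  then show "correct_prob_given \<sigma> \<theta> l \<le> 1"
    using correct_prob_given_eq[OF assms] by simp
qed

lemma correct_prob_given_ge:
  assumes "0 < \<sigma>" "\<theta> \<in> {-1, 1}" "0 < M" "M \<le> \<theta> * l"
  shows "1 - \<sigma>\<^sup>2 / (1 + \<sigma>\<^sup>2 * M / 2)\<^sup>2 \<le> correct_prob_given \<sigma> \<theta> l"
proof -
  define d where "d = 1 + \<sigma>\<^sup>2 * (\<theta> * l) / 2"
  have "1 + \<sigma>\<^sup>2 * M / 2 \<le> d"
    unfolding d_def using assms(4) by (simp add: mult_left_mono)
  moreover have "0 < 1 + \<sigma>\<^sup>2 * M / 2"
    using assms(3) by (simp add: add_pos_nonneg)
  ultimately have "\<sigma>\<^sup>2 / d\<^sup>2 \<le> \<sigma>\<^sup>2 / (1 + \<sigma>\<^sup>2 * M / 2)\<^sup>2"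
    by (intro divide_left_mono power_mono mult_pos_pos) auto
  moreover have "(\<integral>s. normal_density \<theta> \<sigma> s * indicator {s. act \<sigma> l s \<noteq> \<theta>} s \<partial>lborel) \<le> \<sigma>\<^sup>2 / d\<^sup>2"
  proof (rule normal_tail_chebyshev)
    show "0 < d" using \<open>1 + \<sigma>\<^sup>2 * M / 2 \<le> d\<close> \<open>0 < 1 + \<sigma>\<^sup>2 * M / 2\<close> by linarith
    show "d \<le> \<bar>s - \<theta>\<bar>" if "s \<in> {s. act \<sigma> l s \<noteq> \<theta>}" for s
      using assms(2) that \<open>0 < d\<close> unfolding d_def by (auto simp: act_def thr_def split: if_splits)
  qed (use assms(1) in auto)
  ultimately show ?thesis
    using correct_prob_given_eq[OF assms(1), of \<theta> l] by linarith
qed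

section \<open>The public log-likelihood ratio\<close>

lemma finite_set_pmf_llr_law: "finite (set_pmf (llr_law \<sigma> \<theta> n))"
  by (induction n) auto

lemma integrable_llr_law: "integrable (measure_pmf (llr_law \<sigma> \<theta> n)) (f :: real \<Rightarrow> real)"
  by (intro integrable_measure_pmf_finite finite_set_pmf_llr_law)

text \<open>The square root of the public odds P(-\<theta> | history) / P(\<theta> | history); under \<theta> it is a
  supermartingale along the public LLR process.\<close>
definition wrong_odds_root :: "real \<Rightarrow> real \<Rightarrow> real" where
  "wrong_odds_root \<theta> l = exp (- (\<theta> * l) / 2)"

definition bhattacharyya :: "real \<Rightarrow> real \<Rightarrow> real" where
  "bhattacharyya \<sigma> l = sqrt (xprob \<sigma> l 1 1 * xprob \<sigma> l (-1) 1)
                      + sqrt ((1 - xprob \<sigma> l 1 1) * (1 - xprob \<sigma> l (-1) 1))"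

lemma wrong_odds_root_pos: "0 < wrong_odds_root \<theta> l"
  by (simp add: wrong_odds_root_def)

lemma wrong_odds_root_add: "wrong_odds_root \<theta> (l + d) = wrong_odds_root \<theta> l * exp (- (\<theta> * d) / 2)"
  unfolding wrong_odds_root_def by (simp add: distrib_left add_divide_distrib flip: exp_add)

lemma xprob_strict_bounds:
  "0 < \<sigma> \<Longrightarrow> 0 < xprob \<sigma> l \<theta> 1 \<and> xprob \<sigma> l \<theta> 1 < 1"
  using xprob_pos xprob_less_1 by blast

lemma bhattacharyya_bounds:
  assumes "0 < \<sigma>"
  shows "0 \<le> bhattacharyya \<sigma> l"
    and "bhattacharyya \<sigma> l \<le> 1 - (xprob \<sigma> l 1 1 - xprob \<sigma> l (-1) 1)\<^sup>2 / 4"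
  using xprob_strict_bounds[OF assms, of l 1] xprob_strict_bounds[OF assms, of l "-1"]
  unfolding bhattacharyya_def by (auto intro!: bernoulli_bhattacharyya_le)

lemma bhattacharyya_le_1: "0 < \<sigma> \<Longrightarrow> bhattacharyya \<sigma> l \<le> 1"
  using bhattacharyya_bounds(2)[of \<sigma> l] zero_le_power2[of "xprob \<sigma> l 1 1 - xprob \<sigma> l (-1) 1"]
  by linarith

lemma expectation_wrong_odds_root_after_report:
  assumes "0 < \<sigma>" "\<theta> \<in> {-1, 1}"
  shows "measure_pmf.expectation
           (map_pmf (\<lambda>b. upd \<sigma> l (if b then 1 else -1)) (bernoulli_pmf (xprob \<sigma> l \<theta> 1)))
           (wrong_odds_root \<theta>)
       = wrong_odds_root \<theta> l * bhattacharyya \<sigma> l"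
proof -
  define p q where "p = xprob \<sigma> l 1 1" and "q = xprob \<sigma> l (-1) 1"
  have pq: "0 < p" "p < 1" "0 < q" "q < 1"
    unfolding p_def q_def using xprob_strict_bounds[OF assms(1)] by auto
  have upd: "upd \<sigma> l 1 = l + ln (p / q)" "upd \<sigma> l (-1) = l + ln ((1 - p) / (1 - q))"
    unfolding upd_def p_def q_def xprob_minus_one[OF assms(1)] by simp_all
  have "measure_pmf.expectation
           (map_pmf (\<lambda>b. upd \<sigma> l (if b then 1 else -1)) (bernoulli_pmf (xprob \<sigma> l \<theta> 1)))
           (wrong_odds_root \<theta>)
      = xprob \<sigma> l \<theta> 1 * wrong_odds_root \<theta> (upd \<sigma> l 1)
        + (1 - xprob \<sigma> l \<theta> 1) * wrong_odds_root \<theta> (upd \<sigma> l (-1))"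
    using xprob_strict_bounds[OF assms(1), of l \<theta>] by (simp add: mult.commute)
  also have "\<dots> = wrong_odds_root \<theta> l * bhattacharyya \<sigma> l"
  proof (cases "\<theta> = 1")
    case True
    have bc: "p * exp (- (1 * ln (p / q)) / 2) + (1 - p) * exp (- (1 * ln ((1 - p) / (1 - q))) / 2)
        = bhattacharyya \<sigma> l"
      unfolding bhattacharyya_def p_def[symmetric] q_def[symmetric]
      using mult_exp_neg_half_ln_div[of p q] mult_exp_neg_half_ln_div[of "1 - p" "1 - q"] pq by simp
    show ?thesis
      unfolding upd wrong_odds_root_add True p_def[symmetric] by (simp add: algebra_simps flip: bc)
  next
    case False
    then have "\<theta> = -1" using assms(2) by simp
    have bc: "q * exp (- (- 1 * ln (p / q)) / 2) + (1 - q) * exp (- (- 1 * ln ((1 - p) / (1 - q))) / 2)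
        = bhattacharyya \<sigma> l"
      unfolding bhattacharyya_def p_def[symmetric] q_def[symmetric]
      using mult_exp_neg_half_ln_div[of q p] mult_exp_neg_half_ln_div[of "1 - q" "1 - p"] pq
      by (simp add: ln_div mult.commute)
    show ?thesis
      unfolding upd wrong_odds_root_add \<open>\<theta> = -1\<close> q_def[symmetric] by (simp add: algebra_simps flip: bc)
  qed
  finally show ?thesis .
qed

lemma expectation_wrong_odds_root_Suc:
  assumes "0 < \<sigma>" "\<theta> \<in> {-1, 1}"
  shows "measure_pmf.expectation (llr_law \<sigma> \<theta> (Suc n)) (wrong_odds_root \<theta>)
       = measure_pmf.expectation (llr_law \<sigma> \<theta> n) (\<lambda>l. wrong_odds_root \<theta> l * bhattacharyya \<sigma> l)"
proof -
  have "measure_pmf.expectation (llr_law \<sigma> \<theta> (Suc n)) (wrong_odds_root \<theta>)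
      = measure_pmf.expectation (llr_law \<sigma> \<theta> n) (\<lambda>l. measure_pmf.expectation
           (map_pmf (\<lambda>b. upd \<sigma> l (if b then 1 else -1)) (bernoulli_pmf (xprob \<sigma> l \<theta> 1)))
           (wrong_odds_root \<theta>))"
    unfolding llr_law.simps
    by (rule expectation_bind_pmf_finite) (simp_all add: finite_set_pmf_llr_law)
  also have "\<dots> = measure_pmf.expectation (llr_law \<sigma> \<theta> n) (\<lambda>l. wrong_odds_root \<theta> l * bhattacharyya \<sigma> l)"
    by (rule Bochner_Integration.integral_cong[OF refl])
       (rule expectation_wrong_odds_root_after_report[OF assms])
  finally show ?thesis .
qed

lemma expectation_wrong_odds_root_bounds:
  assumes "0 < \<sigma>" "\<theta> \<in> {-1, 1}"
  shows "0 \<le> measure_pmf.expectation (llr_law \<sigma> \<theta> n) (wrong_odds_root \<theta>)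
       \<and> measure_pmf.expectation (llr_law \<sigma> \<theta> n) (wrong_odds_root \<theta>) \<le> 1"
proof (induction n)
  case 0
  then show ?case by (simp add: wrong_odds_root_def)
next
  case (Suc n)
  have "measure_pmf.expectation (llr_law \<sigma> \<theta> n) (\<lambda>l. wrong_odds_root \<theta> l * bhattacharyya \<sigma> l)
      \<le> measure_pmf.expectation (llr_law \<sigma> \<theta> n) (wrong_odds_root \<theta>)"
  proof (intro integral_mono integrable_llr_law)
    fix l
    show "wrong_odds_root \<theta> l * bhattacharyya \<sigma> l \<le> wrong_odds_root \<theta> l"
      using bhattacharyya_le_1[OF assms(1), of l] wrong_odds_root_pos[of \<theta> l] by (simp add: mult_left_le)
  qed
  moreover have "0 \<le> measure_pmf.expectation (llr_law \<sigma> \<theta> n) (\<lambda>l. wrong_odds_root \<theta> l * bhattacharyya \<sigma> l)"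
    using bhattacharyya_bounds(1)[OF assms(1)] wrong_odds_root_pos
    by (intro integral_nonneg_AE) (simp add: less_imp_le)
  ultimately show ?case
    using Suc.IH unfolding expectation_wrong_odds_root_Suc[OF assms] by linarith
qed

lemma wrong_odds_root_loss_in_window:
  assumes "0 < \<sigma>" "\<theta> \<in> {-1, 1}"
  obtains \<kappa> where "0 < \<kappa>"
    "\<And>l. \<kappa> * indicator {l. \<bar>l\<bar> \<le> M} l \<le> wrong_odds_root \<theta> l - wrong_odds_root \<theta> l * bhattacharyya \<sigma> l"
proof -
  obtain \<delta> where \<delta>: "0 < \<delta>" "\<And>l. \<bar>l\<bar> \<le> M \<Longrightarrow> \<delta> \<le> xprob \<sigma> l 1 1 - xprob \<sigma> l (-1) 1"
    using xprob_gap_in_window[OF assms(1)] by blast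
  define \<kappa> where "\<kappa> = exp (- M / 2) * \<delta>\<^sup>2 / 4"
  have "\<kappa> * indicator {l. \<bar>l\<bar> \<le> M} l \<le> wrong_odds_root \<theta> l - wrong_odds_root \<theta> l * bhattacharyya \<sigma> l" for l
  proof (cases "\<bar>l\<bar> \<le> M")
    case True
    then have "exp (- M / 2) \<le> wrong_odds_root \<theta> l"
      using assms(2) by (auto simp: wrong_odds_root_def)
    moreover have "\<delta>\<^sup>2 \<le> (xprob \<sigma> l 1 1 - xprob \<sigma> l (-1) 1)\<^sup>2"
      using \<delta>(1) \<delta>(2)[OF True] by (intro power_mono) auto
    then have "\<delta>\<^sup>2 / 4 \<le> 1 - bhattacharyya \<sigma> l"
      using bhattacharyya_bounds(2)[OF assms(1), of l] by linarith
    ultimately have "exp (- M / 2) * (\<delta>\<^sup>2 / 4) \<le> wrong_odds_root \<theta> l * (1 - bhattacharyya \<sigma> l)"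
      using wrong_odds_root_pos[of \<theta> l] by (intro mult_mono) auto
    then show ?thesis
      using True by (simp add: \<kappa>_def algebra_simps)
  next
    case False
    have "0 \<le> wrong_odds_root \<theta> l * (1 - bhattacharyya \<sigma> l)"
      using bhattacharyya_le_1[OF assms(1), of l] wrong_odds_root_pos[of \<theta> l] by simp
    then show ?thesis
      using False by (simp add: algebra_simps)
  qed
  moreover have "0 < \<kappa>"
    unfolding \<kappa>_def using \<delta>(1) by simp
  ultimately show ?thesis using that by blast
qed

lemma expectation_wrong_odds_root_decrease:
  assumes "0 < \<sigma>" "\<theta> \<in> {-1, 1}"
  obtains \<kappa> where "0 < \<kappa>"
    "\<And>n. \<kappa> * measure_pmf.prob (llr_law \<sigma> \<theta> n) {l. \<bar>l\<bar> \<le> M}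
        \<le> measure_pmf.expectation (llr_law \<sigma> \<theta> n) (wrong_odds_root \<theta>)
          - measure_pmf.expectation (llr_law \<sigma> \<theta> (Suc n)) (wrong_odds_root \<theta>)"
proof -
  obtain \<kappa> where \<kappa>: "0 < \<kappa>"
    "\<And>l. \<kappa> * indicator {l. \<bar>l\<bar> \<le> M} l \<le> wrong_odds_root \<theta> l - wrong_odds_root \<theta> l * bhattacharyya \<sigma> l"
    using wrong_odds_root_loss_in_window[OF assms] by blast
  have "\<kappa> * measure_pmf.prob (llr_law \<sigma> \<theta> n) {l. \<bar>l\<bar> \<le> M}
      = measure_pmf.expectation (llr_law \<sigma> \<theta> n) (\<lambda>l. \<kappa> * indicator {l. \<bar>l\<bar> \<le> M} l)" for n
    by simp
  also have "\<dots> n \<le> measure_pmf.expectation (llr_law \<sigma> \<theta> n)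
                     (\<lambda>l. wrong_odds_root \<theta> l - wrong_odds_root \<theta> l * bhattacharyya \<sigma> l)" for n
    using \<kappa>(2) by (intro integral_mono integrable_llr_law)
  also have "\<dots> n = measure_pmf.expectation (llr_law \<sigma> \<theta> n) (wrong_odds_root \<theta>)
      - measure_pmf.expectation (llr_law \<sigma> \<theta> (Suc n)) (wrong_odds_root \<theta>)" for n
    unfolding expectation_wrong_odds_root_Suc[OF assms]
    by (rule Bochner_Integration.integral_diff[OF integrable_llr_law integrable_llr_law])
  finally show ?thesis
    using that \<kappa>(1) by blast
qed

lemma prob_llr_in_window_tendsto_0:
  assumes "0 < \<sigma>" "\<theta> \<in> {-1, 1}"
  shows "(\<lambda>n. measure_pmf.prob (llr_law \<sigma> \<theta> n) {l. \<bar>l\<bar> \<le> M}) \<longlonglongrightarrow> 0"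
proof -
  obtain \<kappa> where \<kappa>: "0 < \<kappa>"
    "\<And>n. \<kappa> * measure_pmf.prob (llr_law \<sigma> \<theta> n) {l. \<bar>l\<bar> \<le> M}
        \<le> measure_pmf.expectation (llr_law \<sigma> \<theta> n) (wrong_odds_root \<theta>)
          - measure_pmf.expectation (llr_law \<sigma> \<theta> (Suc n)) (wrong_odds_root \<theta>)"
    using expectation_wrong_odds_root_decrease[OF assms] by blast
  show ?thesis
  proof (rule tendsto_zero_if_telescoping_bound)
    show "0 \<le> measure_pmf.expectation (llr_law \<sigma> \<theta> n) (wrong_odds_root \<theta>)" for n
      using expectation_wrong_odds_root_bounds[OF assms] by blast
  qed (rule \<kappa>(1), rule measure_nonneg, rule \<kappa>(2))
qed

lemma prob_llr_wrong_side_le: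
  assumes "0 < \<sigma>" "\<theta> \<in> {-1, 1}"
  shows "measure_pmf.prob (llr_law \<sigma> \<theta> n) {l. \<theta> * l < - M} \<le> exp (- M / 2)"
proof -
  have "measure_pmf.prob (llr_law \<sigma> \<theta> n) {l. \<theta> * l < - M}
      \<le> measure_pmf.prob (llr_law \<sigma> \<theta> n) {l. exp (M / 2) \<le> wrong_odds_root \<theta> l}"
    by (intro measure_pmf.finite_measure_mono) (auto simp: wrong_odds_root_def)
  also have "\<dots> \<le> measure_pmf.expectation (llr_law \<sigma> \<theta> n) (wrong_odds_root \<theta>) / exp (M / 2)"
    using integral_Markov_inequality_measure[where u="wrong_odds_root \<theta>" and A=UNIV and c="exp (M / 2)",
        OF integrable_llr_law]
    by (simp add: wrong_odds_root_pos less_imp_le)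
  also have "\<dots> \<le> 1 / exp (M / 2)"
    using expectation_wrong_odds_root_bounds[OF assms, of n] by (intro divide_right_mono) auto
  also have "\<dots> = exp (- M / 2)"
    by (simp add: exp_minus inverse_eq_divide)
  finally show ?thesis .
qed

lemma error_given_le:
  assumes "0 < \<sigma>" "\<theta> \<in> {-1, 1}" "0 < M"
  shows "1 - correct_prob_given \<sigma> \<theta> l
       \<le> indicator {l. \<bar>l\<bar> \<le> M} l + indicator {l. \<theta> * l < - M} l + \<sigma>\<^sup>2 / (1 + \<sigma>\<^sup>2 * M / 2)\<^sup>2"
proof -
  have c: "0 \<le> correct_prob_given \<sigma> \<theta> l"
    using correct_prob_given_bounds[OF assms(1)] by blast
  have C: "0 \<le> \<sigma>\<^sup>2 / (1 + \<sigma>\<^sup>2 * M / 2)\<^sup>2"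
    by simp
  have indicators: "0 \<le> (indicator {l. \<bar>l\<bar> \<le> M} l :: real)" "0 \<le> (indicator {l. \<theta> * l < - M} l :: real)"
    by simp_all
  consider "M \<le> \<theta> * l" | "\<theta> * l < - M" | "\<bar>l\<bar> \<le> M"
    using assms(2) by force
  then show ?thesis
  proof cases
    case 1
    then show ?thesis
      using correct_prob_given_ge[OF assms 1] indicators by linarith
  next
    case 2
    then have "indicator {l. \<theta> * l < - M} l = (1 :: real)" by simp
    then show ?thesis using c C indicators by linarith
  next
    case 3
    then have "indicator {l. \<bar>l\<bar> \<le> M} l = (1 :: real)" by simp
    then show ?thesis using c C indicators by linarith
  qed
qed

lemma error_prob_le:
  assumes "0 < \<sigma>" "\<theta> \<in> {-1, 1}" "0 < M"
  shows "1 - measure_pmf.expectation (llr_law \<sigma> \<theta> n) (correct_prob_given \<sigma> \<theta>)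
       \<le> measure_pmf.prob (llr_law \<sigma> \<theta> n) {l. \<bar>l\<bar> \<le> M}
         + (exp (- M / 2) + \<sigma>\<^sup>2 / (1 + \<sigma>\<^sup>2 * M / 2)\<^sup>2)"
proof -
  define C where "C = \<sigma>\<^sup>2 / (1 + \<sigma>\<^sup>2 * M / 2)\<^sup>2"
  have "1 - measure_pmf.expectation (llr_law \<sigma> \<theta> n) (correct_prob_given \<sigma> \<theta>)
      \<le> measure_pmf.expectation (llr_law \<sigma> \<theta> n)
           (\<lambda>l. indicator {l. \<bar>l\<bar> \<le> M} l + indicator {l. \<theta> * l < - M} l + C)"
    using integral_mono[OF integrable_llr_law integrable_llr_law, of \<sigma> \<theta> n "\<lambda>l. 1 - correct_prob_given \<sigma> \<theta> l"]
      error_given_le[OF assms, folded C_def]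
    by (simp add: Bochner_Integration.integral_diff[OF integrable_llr_law integrable_llr_law])
  also have "\<dots> = measure_pmf.prob (llr_law \<sigma> \<theta> n) {l. \<bar>l\<bar> \<le> M}
      + measure_pmf.prob (llr_law \<sigma> \<theta> n) {l. \<theta> * l < - M} + C"
    using integrable_llr_law by simp
  finally show ?thesis
    using prob_llr_wrong_side_le[OF assms(1,2), of n M] unfolding C_def by linarith
qed

lemma expectation_correct_prob_given_tendsto_1:
  assumes "0 < \<sigma>" "\<theta> \<in> {-1, 1}"
  shows "(\<lambda>n. measure_pmf.expectation (llr_law \<sigma> \<theta> n) (correct_prob_given \<sigma> \<theta>)) \<longlonglongrightarrow> 1"
proof -
  have "(\<lambda>n. 1 - measure_pmf.expectation (llr_law \<sigma> \<theta> n) (correct_prob_given \<sigma> \<theta>)) \<longlonglongrightarrow> 0"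
  proof (rule tendsto_zero_if_bounded_by_vanishing)
    show "((\<lambda>M. exp (- M / 2) + \<sigma>\<^sup>2 / (1 + \<sigma>\<^sup>2 * M / 2)\<^sup>2) \<longlongrightarrow> 0) at_top"
      using assms(1) by real_asymp
    have "measure_pmf.expectation (llr_law \<sigma> \<theta> n) (correct_prob_given \<sigma> \<theta>) \<le> 1" for n
      using correct_prob_given_bounds[OF assms(1)]
      by (intro measure_pmf.integral_le_const integrable_llr_law) auto
    then show "\<bar>1 - measure_pmf.expectation (llr_law \<sigma> \<theta> n) (correct_prob_given \<sigma> \<theta>)\<bar>
        \<le> measure_pmf.prob (llr_law \<sigma> \<theta> n) {l. \<bar>l\<bar> \<le> M}
          + (exp (- M / 2) + \<sigma>\<^sup>2 / (1 + \<sigma>\<^sup>2 * M / 2)\<^sup>2)" if "0 < M" for M n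
      using error_prob_le[OF assms that, of n] by simp
  qed (rule prob_llr_in_window_tendsto_0[OF assms])
  from tendsto_diff[OF tendsto_const this, of 1] show ?thesis
    by simp
qed

theorem theorem9:
  fixes \<sigma> :: real
  assumes "\<sigma> > 0"
  shows "(\<lambda>n. prob_correct \<sigma> n) \<longlonglongrightarrow> 1"
proof -
  have eq: "prob_correct \<sigma> (Suc n)
      = (measure_pmf.expectation (llr_law \<sigma> (-1) n) (correct_prob_given \<sigma> (-1))
         + measure_pmf.expectation (llr_law \<sigma> 1 n) (correct_prob_given \<sigma> 1)) / 2" for n
    by (simp add: prob_correct_def)
  have "(\<lambda>n. (measure_pmf.expectation (llr_law \<sigma> (-1) n) (correct_prob_given \<sigma> (-1))
         + measure_pmf.expectation (llr_law \<sigma> 1 n) (correct_prob_given \<sigma> 1)) / 2) \<longlonglongrightarrow> (1 + 1) / 2"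
    using assms by (intro tendsto_intros expectation_correct_prob_given_tendsto_1) auto
  then have "(\<lambda>n. prob_correct \<sigma> (Suc n)) \<longlonglongrightarrow> 1"
    unfolding eq by simp
  then show ?thesis
    by (rule LIMSEQ_imp_Suc)
qed

end
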